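(* Let $\mathbb{K}$ be a field of characteristic $3$ and $\mathcal{F}$ an exceptional $\overline{1}$-spec subspace of $M_3(\mathbb{K})$. Then for every nonzero $x\in\mathbb{K}^3$, $\dim\{Mx: M\in\mathcal{F}\}\geq 2$.
   Context: A $\overline{1}$-spec subspace of $M_3(\mathbb{K})$ is a linear subspace in which every matrix has at most one eigenvalue in an algebraic closure $\overline{\mathbb{K}}$; it is exceptional if it has dimension $4$ and is not similar to $\mathbb{K}I_3\oplus\mathrm{NT}_3(\mathbb{K})$, where $\mathrm{NT}_3(\mathbb{K})$ is the space of strictly upper-triangular $3\times3$ matrices. *)

theory Defs
  imports "HOL-Analysis.Analysis" "HOL-Algebra.Algebraic_Closure_Type"
begin

definition mscale :: "'a::field \<Rightarrow> 'a^3^3 \<Rightarrow> 'a^3^3" where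
  "mscale c A = (\<chi> i j. c * A $ i $ j)"

definition ac_eigenvalue :: "'a::field^3^3 \<Rightarrow> 'a alg_closure \<Rightarrow> bool" where
  "ac_eigenvalue M z \<longleftrightarrow>
     (\<exists>v :: ('a alg_closure)^3. v \<noteq> 0 \<and> map_matrix to_ac M *v v = z *s v)"

definition one_spec_subspace :: "('a::field^3^3) set \<Rightarrow> bool" where
  "one_spec_subspace F \<longleftrightarrow> module.subspace mscale F \<and>
     (\<forall>M\<in>F. \<forall>z w. ac_eigenvalue M z \<and> ac_eigenvalue M w \<longrightarrow> z = w)"

definition NT3 :: "('a::field^3^3) set" where
  "NT3 = {N. \<forall>i j. j \<le> i \<longrightarrow> N $ i $ j = 0}"

definition KI_NT3 :: "('a::field^3^3) set" where
  "KI_NT3 = {mat c + N | c N. N \<in> NT3}"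

definition similar_space :: "('a::field^3^3) set \<Rightarrow> ('a^3^3) set \<Rightarrow> bool" where
  "similar_space F G \<longleftrightarrow> (\<exists>P Q. P ** Q = mat 1 \<and> Q ** P = mat 1 \<and>
       F = (\<lambda>M. P ** M ** Q) ` G)"

definition exceptional_one_spec :: "('a::field^3^3) set \<Rightarrow> bool" where
  "exceptional_one_spec F \<longleftrightarrow> one_spec_subspace F \<and>
     vector_space.dim mscale F = 4 \<and> \<not> similar_space F KI_NT3"

end

theory Submission
  imports Defs
begin

text \<open>Over an algebraic closure, a matrix with a single eigenvalue \<open>r\<close> has characteristic
  polynomial \<open>(z - r)\<^sup>3\<close>, whose middle coefficients \<open>-3r\<close> and \<open>3r\<^sup>2\<close> vanish in
  characteristic 3. So every matrix of \<open>F\<close> is traceless and, polarizing the second coefficient,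
  \<open>tr (M N) = 0\<close> for all \<open>M, N \<in> F\<close>.

  Suppose \<open>F x\<close> is at most a line; after a conjugation \<open>x = e\<^sub>1\<close>. The kernel of
  \<open>M \<mapsto> M e\<^sub>1\<close> in \<open>F\<close> has dimension at least 3. For matrices whose first column is
  \<open>(m, 0, 0)\<close> the trace form only sees \<open>(M\<^sub>2\<^sub>2 - M\<^sub>1\<^sub>1, M\<^sub>2\<^sub>3, M\<^sub>3\<^sub>2)\<close>,
  on which it is \<open>2aa' + bc' + b'c\<close>; the totally isotropic subspaces of this form are at most
  lines. In the kernel this forces \<open>E\<^sub>1\<^sub>2, E\<^sub>1\<^sub>3 \<in> F\<close>; orthogonality to them kills
  \<open>M\<^sub>2\<^sub>1, M\<^sub>3\<^sub>1\<close> on all of \<open>F\<close>, so \<open>F\<close> lies in the span of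
  \<open>I, E\<^sub>1\<^sub>2, E\<^sub>1\<^sub>3\<close> and one nilpotent block. That span is conjugate into
  \<open>K I\<^sub>3 + NT\<^sub>3\<close>, and as \<open>dim F = 4\<close>, \<open>F\<close> is similar to \<open>K I\<^sub>3 + NT\<^sub>3\<close>.\<close>

(* the formal power series loaded by Defs also use $ for coefficients *)
no_notation fps_nth (infixl \<open>$\<close> 75)

section \<open>The vector space of \<open>3 \<times> 3\<close> matrices\<close>

lemma (in finite_dimensional_vector_space) dim_le_1_obtains_span_singleton:
  assumes "dim S \<le> 1"
  obtains y where "S \<subseteq> span {y}"
proof -
  obtain B where B: "B \<subseteq> S" "independent B" "S \<subseteq> span B" "card B = dim S"
    by (rule basis_exists)
  have "finite B" by (rule finiteI_independent[OF B(2)])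
  moreover have "card B \<le> 1" using B(4) assms by (rule ord_eq_le_trans)
  ultimately obtain y where "B \<subseteq> {y}"
    by (metis card_le_Suc0_iff_eq One_nat_def insertCI subsetI)
  then show thesis using B(3) span_mono that by (meson order_trans)
qed

lemma mscale_nth [simp]: "mscale c A $ i $ j = c * A $ i $ j"
  by (simp add: mscale_def)

interpretation ms: vector_space "mscale :: 'a::field \<Rightarrow> 'a^3^3 \<Rightarrow> 'a^3^3"
  by unfold_locales (simp_all add: vec_eq_iff algebra_simps)

definition matrix_unit :: "3 \<Rightarrow> 3 \<Rightarrow> 'a::field^3^3" where
  "matrix_unit i j = (\<chi> a b. if a = i \<and> b = j then 1 else 0)"

lemma matrix_unit_nth [simp]: "matrix_unit i j $ a $ b = (if a = i \<and> b = j then 1 else 0)"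
  by (simp add: matrix_unit_def)

lemma matrix_eq_sum_matrix_units:
  "(M::'a::field^3^3) = (\<Sum>p\<in>UNIV. mscale (M $ fst p $ snd p) (matrix_unit (fst p) (snd p)))"
proof -
  have "(\<Sum>p\<in>UNIV. mscale (M $ fst p $ snd p) (matrix_unit (fst p) (snd p))) $ a $ b
      = (\<Sum>p\<in>UNIV. if p = (a, b) then M $ a $ b else 0)" for a b
    unfolding sum_component by (rule sum.cong) auto
  then show ?thesis by (simp add: vec_eq_iff)
qed

interpretation ms: finite_dimensional_vector_space "mscale :: 'a::field \<Rightarrow> 'a^3^3 \<Rightarrow> 'a^3^3"
  "(\<lambda>p. matrix_unit (fst p) (snd p)) ` UNIV"
proof
  show "finite ((\<lambda>p. matrix_unit (fst p) (snd p)) ` (UNIV::(3\<times>3) set) :: ('a^3^3) set)"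
    by simp
  show "ms.span ((\<lambda>p. matrix_unit (fst p) (snd p)) ` UNIV) = (UNIV :: ('a^3^3) set)"
  proof safe
    fix M :: "'a^3^3"
    show "M \<in> ms.span ((\<lambda>p. matrix_unit (fst p) (snd p)) ` UNIV)"
      by (subst matrix_eq_sum_matrix_units) (intro ms.span_sum ms.span_scale ms.span_base; auto)
  qed simp
  show "ms.independent ((\<lambda>p. matrix_unit (fst p) (snd p)) ` (UNIV::(3\<times>3) set) :: ('a^3^3) set)"
    unfolding ms.dependent_explicit
  proof clarify
    fix T u v
    assume T: "finite T" "T \<subseteq> (\<lambda>p. matrix_unit (fst p) (snd p)) ` (UNIV::(3\<times>3) set)"
      and sum: "(\<Sum>v\<in>T. mscale (u v) v) = (0::'a^3^3)" and v: "v \<in> T" "u v \<noteq> 0"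
    from v T obtain a b where v_ab: "v = matrix_unit a b" by auto
    have "0 = (\<Sum>w\<in>T. mscale (u w) w) $ a $ b" using sum by simp
    also have "\<dots> = (\<Sum>w\<in>T. u w * w $ a $ b)" by (simp add: sum_component)
    also have "\<dots> = (\<Sum>w\<in>T. if w = v then u v else 0)"
    proof (rule sum.cong[OF refl])
      fix w assume "w \<in> T"
      then obtain c d where "w = matrix_unit c d" using T by auto
      then show "u w * w $ a $ b = (if w = v then u v else 0)"
        using v_ab by (auto dest: arg_cong[where f="\<lambda>M. M $ c $ d"])
    qed
    also have "\<dots> = u v" using v T by simp
    finally show False using v by simp
  qed
qed

interpretation msp: finite_dimensional_vector_space_pair_1
  "mscale :: 'a::field \<Rightarrow> 'a^3^3 \<Rightarrow> 'a^3^3" "(\<lambda>p. matrix_unit (fst p) (snd p)) ` UNIV"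
  "mscale :: 'a::field \<Rightarrow> 'a^3^3 \<Rightarrow> 'a^3^3" ..

lemma mat3_eqI:
  fixes A B :: "'a^3^3"
  assumes "A$1$1 = B$1$1" "A$1$2 = B$1$2" "A$1$3 = B$1$3" "A$2$1 = B$2$1" "A$2$2 = B$2$2"
    "A$2$3 = B$2$3" "A$3$1 = B$3$1" "A$3$2 = B$3$2" "A$3$3 = B$3$3"
  shows "A = B"
  using assms by (simp add: vec_eq_iff forall_3)

lemma matrix_mult_nth_3:
  "((A::'a::semiring_1^3^3) ** B) $ i $ j = A$i$1 * B$1$j + A$i$2 * B$2$j + A$i$3 * B$3$j"
  unfolding matrix_matrix_mult_def sum_3 by simp

lemma trace_3: "trace (M::'a::semiring_1^3^3) = M$1$1 + M$2$2 + M$3$3"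
  unfolding trace_def sum_3 ..

lemma matrix_vector_mult_axis_1: "((M::'a::semiring_1^3^3) *v axis 1 1) $ i = M $ i $ 1"
  by (simp add: matrix_vector_mult_def sum_3 axis_def)

lemma mscale_matrix_vector_mult: "mscale c (A::'a::field^3^3) *v v = c *s (A *v v)"
  by (simp add: vec_eq_iff matrix_vector_mult_def sum_distrib_left algebra_simps)

lemma module_hom_conj: "module_hom mscale mscale (\<lambda>N::'a::field^3^3. A ** N ** B)"
  by unfold_locales (auto intro!: mat3_eqI simp: matrix_mult_nth_3 algebra_simps)

lemma conj_conj_cancel:
  assumes "P ** Q = mat (1::'a::semiring_1)"
  shows "P ** (Q ** M ** P) ** Q = (M::'a^'n^'n)"
proof -
  have "P ** (Q ** M ** P) ** Q = (P ** Q) ** M ** (P ** Q)" by (simp add: matrix_mul_assoc)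
  then show ?thesis using assms by simp
qed

lemma dim_conj_image:
  fixes F :: "('a::field^3^3) set" and P Q :: "'a^3^3"
  assumes "P ** Q = mat 1" "Q ** P = mat 1"
  shows "ms.dim ((\<lambda>M. P ** M ** Q) ` F) = ms.dim F"
proof (rule msp.dim_image_eq[OF module_hom_conj[unfolded module_hom_iff_linear]])
  show "inj_on (\<lambda>M. P ** M ** Q) (ms.span F)"
  proof (rule inj_onI)
    fix M N assume "P ** M ** Q = P ** N ** Q"
    then have "Q ** (P ** M ** Q) ** P = Q ** (P ** N ** Q) ** P" by simp
    then show "M = N" unfolding conj_conj_cancel[OF assms(2)] .
  qed
qed

lemma similar_space_conj:
  assumes "P ** Q = mat 1" "Q ** P = mat 1" "similar_space F G"
  shows "similar_space ((\<lambda>M. P ** M ** Q) ` F) G"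
proof -
  obtain P' Q' where PQ': "P' ** Q' = mat 1" "Q' ** P' = mat 1" "F = (\<lambda>M. P' ** M ** Q') ` G"
    using assms(3) unfolding similar_space_def by blast
  have "(\<lambda>M. P ** M ** Q) ` F = (\<lambda>M. (P ** P') ** M ** (Q' ** Q)) ` G"
    unfolding PQ'(3) image_image by (simp add: matrix_mul_assoc)
  moreover have "(P ** P') ** (Q' ** Q) = mat 1"
  proof -
    have "(P ** P') ** (Q' ** Q) = P ** (P' ** Q') ** Q" by (simp add: matrix_mul_assoc)
    then show ?thesis using assms(1) PQ'(1) by simp
  qed
  moreover have "(Q' ** Q) ** (P ** P') = mat 1"
  proof -
    have "(Q' ** Q) ** (P ** P') = Q' ** (Q ** P) ** P'" by (simp add: matrix_mul_assoc)
    then show ?thesis using assms(2) PQ'(2) by simp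
  qed
  ultimately show ?thesis unfolding similar_space_def by blast
qed

lemma invertible_with_first_column:
  fixes x :: "'a::field^3"
  assumes "x \<noteq> 0"
  obtains P Q :: "'a^3^3" where "P ** Q = mat 1" "Q ** P = mat 1" "P *v axis 1 1 = x"
proof -
  have column: "P *v axis 1 1 = x" if "P$1$1 = x$1" "P$2$1 = x$2" "P$3$1 = x$3" for P :: "'a^3^3"
    using that by (simp add: vec_eq_iff forall_3 matrix_vector_mult_axis_1)
  have "\<exists>P. det P \<noteq> 0 \<and> P *v axis 1 1 = x"
  proof -
    consider "x$1 \<noteq> 0" | "x$2 \<noteq> 0" | "x$3 \<noteq> 0"
      using assms by (auto simp: vec_eq_iff forall_3)
    then show ?thesis
    proof cases
      case 1
      show ?thesis
        by (rule exI[of _ "vector [vector [x$1,0,0], vector [x$2,1,0], vector [x$3,0,1]]"])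
          (use 1 in \<open>simp add: det_3 column\<close>)
    next
      case 2
      show ?thesis
        by (rule exI[of _ "vector [vector [x$1,1,0], vector [x$2,0,0], vector [x$3,0,1]]"])
          (use 2 in \<open>simp add: det_3 column\<close>)
    next
      case 3
      show ?thesis
        by (rule exI[of _ "vector [vector [x$1,1,0], vector [x$2,0,1], vector [x$3,0,0]]"])
          (use 3 in \<open>simp add: det_3 column\<close>)
    qed
  qed
  then obtain P where "det P \<noteq> 0" "P *v axis 1 1 = x" by blast
  moreover obtain Q where "P ** Q = mat 1" "Q ** P = mat 1"
    using \<open>det P \<noteq> 0\<close> invertible_det_nz unfolding invertible_def by blast
  ultimately show thesis using that by blast
qed

section \<open>Single eigenvalue in characteristic 3\<close>

lemma three_eq_0_if_CHAR: "CHAR('a::semiring_1) = 3 \<Longrightarrow> (3::'a) = 0"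
  using of_nat_CHAR[where 'a='a] by simp

definition principal_minors2 :: "'a::comm_ring_1^3^3 \<Rightarrow> 'a" where
  "principal_minors2 M = M$1$1 * M$2$2 - M$1$2 * M$2$1 + M$1$1 * M$3$3 - M$1$3 * M$3$1
     + M$2$2 * M$3$3 - M$2$3 * M$3$2"

lemma det_mat_minus_3:
  fixes A :: "'a::comm_ring_1^3^3"
  shows "det (mat z - A) = z^3 - trace A * z^2 + principal_minors2 A * z - det A"
  unfolding det_3 trace_3 principal_minors2_def
  by (simp add: mat_def algebra_simps power2_eq_square power3_eq_cube)

lemma eigenvector_if_det_mat_minus_eq_0:
  fixes A :: "'a::field^'n^'n"
  assumes "det (mat z - A) = 0"
  obtains v where "v \<noteq> 0" "A *v v = z *s v"
proof -
  have "mat z *v v = z *s v" for v :: "'a^'n"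
    by (auto simp: vec_eq_iff matrix_vector_mult_def mat_def if_distrib if_distribR cong: if_cong)
  moreover have "\<not> invertible (mat z - A)" using assms invertible_det_nz by blast
  then obtain v where "v \<noteq> 0" "(mat z - A) *v v = 0"
    using matrix_left_invertible_ker invertible_left_inverse by blast
  ultimately show thesis
    using that by (simp add: matrix_vector_mult_diff_rdistrib)
qed

lemma char3_cubic_single_root:
  fixes T S D :: "'b::alg_closed_field"
  assumes three: "(3::'b) = 0"
    and single: "\<And>z w. z^3 - T*z^2 + S*z - D = 0 \<Longrightarrow> w^3 - T*w^2 + S*w - D = 0 \<Longrightarrow> z = w"
  shows "T = 0 \<and> S = 0"
proof -
  obtain r where r: "r^3 - T*r^2 + S*r - D = 0"
    using alg_closed_imp_poly_has_root[of "[:-D, S, -T, 1:]"]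
    by (auto simp: algebra_simps power2_eq_square power3_eq_cube)
  obtain w where w: "w^2 + (r - T)*w + (r^2 - T*r + S) = 0"
    using alg_closed_imp_poly_has_root[of "[:r^2 - T*r + S, r - T, 1:]"]
    by (auto simp: algebra_simps power2_eq_square)
  define w' where "w' = T - r - w"
  have w': "w'^2 + (r - T)*w' + (r^2 - T*r + S) = 0"
    using w unfolding w'_def by (simp add: algebra_simps power2_eq_square)
  \<comment> \<open>\<open>w\<close> and \<open>w'\<close> are the two roots of the cubic divided by \<open>z - r\<close>\<close>
  have factor: "z^3 - T*z^2 + S*z - D
      = (z - r) * (z^2 + (r - T)*z + (r^2 - T*r + S)) + (r^3 - T*r^2 + S*r - D)" for z
    by (simp add: algebra_simps power2_eq_square power3_eq_cube)
  have "w = r"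
    using single[OF _ r] factor[of w] w r by simp
  moreover have "w' = r"
    using single[OF _ r] factor[of w'] w' r by simp
  ultimately have "T = 3 * r" unfolding w'_def by (simp add: algebra_simps)
  with three have "T = 0" by simp
  moreover have "S = - (3 * r^2)"
    using w \<open>w = r\<close> \<open>T = 0\<close> by (simp add: algebra_simps power2_eq_square eq_neg_iff_add_eq_0)
  ultimately show ?thesis using three by simp
qed

lemma single_eigenvalue_char3:
  fixes M :: "'a::field^3^3"
  assumes "CHAR('a) = 3"
    and single: "\<And>z w. ac_eigenvalue M z \<Longrightarrow> ac_eigenvalue M w \<Longrightarrow> z = w"
  shows "trace M = 0 \<and> principal_minors2 M = 0"
proof -
  define A where "A = map_matrix to_ac M"
  have coeffs: "trace A = to_ac (trace M)" "principal_minors2 A = to_ac (principal_minors2 M)"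
    "det A = to_ac (det M)"
    unfolding A_def trace_3 principal_minors2_def det_3 by simp_all
  have root_eigenvalue: "ac_eigenvalue M z" if "det (mat z - A) = 0" for z
    using eigenvector_if_det_mat_minus_eq_0[OF that] unfolding ac_eigenvalue_def A_def by blast
  have char_poly: "det (mat z - A)
      = z^3 - to_ac (trace M) * z^2 + to_ac (principal_minors2 M) * z - to_ac (det M)" for z
    using det_mat_minus_3[of z A] unfolding coeffs .
  have "to_ac (trace M) = 0 \<and> to_ac (principal_minors2 M) = 0"
  proof (rule char3_cubic_single_root)
    show "(3::'a alg_closure) = 0" by (rule three_eq_0_if_CHAR) (simp add: assms(1))
  next
    fix z w
    assume "z^3 - to_ac (trace M) * z^2 + to_ac (principal_minors2 M) * z - to_ac (det M) = 0"
      and "w^3 - to_ac (trace M) * w^2 + to_ac (principal_minors2 M) * w - to_ac (det M) = 0"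
    then have "ac_eigenvalue M z" "ac_eigenvalue M w"
      using root_eigenvalue char_poly by simp_all
    then show "z = w" by (rule single)
  qed
  then show ?thesis by (simp only: to_ac_eq_0_iff)
qed

section \<open>The trace form\<close>

definition traceless_isotropic :: "('a::semiring_1^'n^'n) set \<Rightarrow> bool" where
  "traceless_isotropic F \<longleftrightarrow> (\<forall>M\<in>F. trace M = 0) \<and> (\<forall>M\<in>F. \<forall>N\<in>F. trace (M ** N) = 0)"

lemma principal_minors2_add:
  fixes M N :: "'a::comm_ring_1^3^3"
  shows "principal_minors2 (M + N)
    = principal_minors2 M + principal_minors2 N + trace M * trace N - trace (M ** N)"
  unfolding principal_minors2_def trace_3 matrix_mult_nth_3 by (simp add: algebra_simps)

lemma one_spec_subspace_traceless_isotropic: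
  fixes F :: "('a::field^3^3) set"
  assumes "CHAR('a) = 3" "one_spec_subspace F"
  shows "traceless_isotropic F"
proof -
  have sub: "ms.subspace F"
    and single: "\<And>M z w. M \<in> F \<Longrightarrow> ac_eigenvalue M z \<Longrightarrow> ac_eigenvalue M w \<Longrightarrow> z = w"
    using assms(2) unfolding one_spec_subspace_def by blast+
  have invariants: "trace M = 0 \<and> principal_minors2 M = 0" if "M \<in> F" for M
    using single_eigenvalue_char3[OF assms(1) single[OF that]] .
  have "trace (M ** N) = 0" if "M \<in> F" "N \<in> F" for M N
  proof -
    have "M + N \<in> F" using sub that by (rule ms.subspace_add)
    then show ?thesis using principal_minors2_add[of M N] invariants that by simp
  qed
  then show ?thesis unfolding traceless_isotropic_def using invariants by blast
qed

lemma traceless_isotropic_conj: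
  fixes F :: "('a::field^3^3) set" and P Q :: "'a^3^3"
  assumes "Q ** P = mat 1" "traceless_isotropic F"
  shows "traceless_isotropic ((\<lambda>M. P ** M ** Q) ` F)"
proof -
  have trace_conj: "trace (P ** M ** Q) = trace M" for M :: "'a^3^3"
  proof -
    have "trace (P ** M ** Q) = trace (Q ** (P ** M))" by (rule trace_mul_sym)
    also have "\<dots> = trace ((Q ** P) ** M)" by (simp add: matrix_mul_assoc)
    finally show ?thesis using assms(1) by simp
  qed
  have product_conj: "(P ** M ** Q) ** (P ** N ** Q) = P ** (M ** N) ** Q" for M N :: "'a^3^3"
  proof -
    have "(P ** M ** Q) ** (P ** N ** Q) = P ** M ** (Q ** P) ** N ** Q"
      by (simp add: matrix_mul_assoc)
    then show ?thesis using assms(1) by (simp add: matrix_mul_assoc)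
  qed
  show ?thesis
    using assms(2) unfolding traceless_isotropic_def by (auto simp: trace_conj product_conj)
qed

lemma isotropic_orthogonal_proportional:
  fixes a b c a' b' c' :: "'a::field"
  assumes X: "a^2 + b*c = 0" and Y: "a'^2 + b'*c' = 0" and E: "2*a*a' + b*c' + b'*c = 0"
    and nonzero: "a \<noteq> 0 \<or> b \<noteq> 0 \<or> c \<noteq> 0"
  obtains l where "a' = l*a" "b' = l*b" "c' = l*c"
proof -
  have "(a*b' - a'*b)^2 = b'^2 * (a^2 + b*c) + b^2*(a'^2 + b'*c') - b*b'*(2*a*a' + b*c' + b'*c)"
    by (simp add: algebra_simps power2_eq_square)
  then have ab: "a*b' = a'*b" using X Y E by simp
  have "(a*c' - a'*c)^2 = c'^2*(a^2+b*c) + c^2*(a'^2+b'*c') - c*c'*(2*a*a' + b*c' + b'*c)"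
    by (simp add: algebra_simps power2_eq_square)
  then have ac: "a*c' = a'*c" using X Y E by simp
  have "(b*c' - b'*c)^2 = (2*a*a' + b*c' + b'*c)^2 - 4*a*a'*(2*a*a' + b*c' + b'*c)
      - 4*(a^2+b*c)*(a'^2+b'*c') + 4*(a^2+b*c)*a'^2 + 4*a^2*(a'^2+b'*c')"
    by (simp add: algebra_simps power2_eq_square)
  then have bc: "b*c' = b'*c" using X Y E by simp
  consider "a \<noteq> 0" | "b \<noteq> 0" | "c \<noteq> 0" using nonzero by blast
  then show thesis
  proof cases
    case 1 then show thesis using ab ac by (intro that[of "a'/a"]) (auto simp: field_simps)
  next
    case 2 then show thesis using ab bc by (intro that[of "b'/b"]) (auto simp: field_simps)
  next
    case 3 then show thesis using ac bc by (intro that[of "c'/c"]) (auto simp: field_simps)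
  qed
qed

section \<open>Matrices with first column \<open>(m, 0, 0)\<close>\<close>

definition block_mat :: "'a::field \<Rightarrow> 'a \<Rightarrow> 'a \<Rightarrow> 'a^3^3" where
  "block_mat a b c = vector [vector [0, 0, 0], vector [0, a, b], vector [0, c, -a]]"

lemma trace_mult_first_column_zero:
  fixes M N :: "'a::field^3^3"
  assumes "(3::'a) = 0" "M$2$1 = 0" "M$3$1 = 0" "N$2$1 = 0" "N$3$1 = 0" "trace M = 0" "trace N = 0"
  shows "trace (M ** N)
    = 2 * (M$2$2 - M$1$1) * (N$2$2 - N$1$1) + M$2$3 * N$3$2 + N$2$3 * M$3$2"
proof -
  have M33: "M$3$3 = - M$1$1 - M$2$2" and N33: "N$3$3 = - N$1$1 - N$2$2"
    using assms(6,7) unfolding trace_3 by (simp_all add: eq_neg_iff_add_eq_0 algebra_simps)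
  have "trace (M ** N) = 2 * (M$2$2 - M$1$1) * (N$2$2 - N$1$1) + M$2$3 * N$3$2 + N$2$3 * M$3$2
      + 3 * (M$2$2 * N$1$1 + M$1$1 * N$2$2)"
    unfolding trace_3 matrix_mult_nth_3 M33 N33 using assms(2-5) by (simp add: algebra_simps)
  then show ?thesis using assms(1) by simp
qed

lemma first_column_zero_block_line:
  fixes S :: "('a::field^3^3) set"
  assumes three: "(3::'a) = 0" and S: "traceless_isotropic S"
    and column: "\<And>M. M \<in> S \<Longrightarrow> M$2$1 = 0 \<and> M$3$1 = 0"
  obtains a b c where "a^2 + b*c = 0"
    "\<And>M. M \<in> S \<Longrightarrow> \<exists>l. M$2$2 - M$1$1 = l*a \<and> M$2$3 = l*b \<and> M$3$2 = l*c"
proof -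
  have orthogonal: "2 * (M$2$2 - M$1$1) * (N$2$2 - N$1$1) + M$2$3 * N$3$2 + N$2$3 * M$3$2 = 0"
    if "M \<in> S" "N \<in> S" for M N
    using trace_mult_first_column_zero[OF three] column[OF that(1)] column[OF that(2)] S that
    unfolding traceless_isotropic_def by metis
  have isotropic: "(M$2$2 - M$1$1)^2 + M$2$3 * M$3$2 = 0" if "M \<in> S" for M
  proof -
    \<comment> \<open>in characteristic 3, \<open>2 q = 0\<close> means \<open>-q = 0\<close>\<close>
    have "(M$2$2 - M$1$1)^2 + M$2$3 * M$3$2
        = 3 * ((M$2$2 - M$1$1)^2 + M$2$3 * M$3$2)
          - (2 * (M$2$2 - M$1$1) * (M$2$2 - M$1$1) + M$2$3 * M$3$2 + M$2$3 * M$3$2)"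
      by (simp add: algebra_simps power2_eq_square)
    also have "\<dots> = 0" using orthogonal[OF that that] by (simp add: three)
    finally show ?thesis .
  qed
  show thesis
  proof (cases "\<exists>M0\<in>S. M0$2$2 - M0$1$1 \<noteq> 0 \<or> M0$2$3 \<noteq> 0 \<or> M0$3$2 \<noteq> 0")
    case True
    then obtain M0 where M0: "M0 \<in> S" "M0$2$2 - M0$1$1 \<noteq> 0 \<or> M0$2$3 \<noteq> 0 \<or> M0$3$2 \<noteq> 0"
      by blast
    show thesis
    proof (rule that[OF isotropic[OF M0(1)]])
      fix M assume "M \<in> S"
      then show "\<exists>l. M$2$2 - M$1$1 = l * (M0$2$2 - M0$1$1) \<and> M$2$3 = l * M0$2$3 \<and> M$3$2 = l * M0$3$2"
        using isotropic_orthogonal_proportional[OF isotropic[OF M0(1)] isotropic _ M0(2)]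
          orthogonal[OF M0(1)] by (metis mult.commute)
    qed
  next
    case False
    then show thesis by (intro that[of 0 0 0]) auto
  qed
qed

lemma first_column_zero_decomposition:
  fixes M :: "'a::field^3^3"
  assumes "(3::'a) = 0" "trace M = 0" "M$2$1 = 0" "M$3$1 = 0"
    and "M$2$2 - M$1$1 = l*a" "M$2$3 = l*b" "M$3$2 = l*c"
  shows "M - mscale (M$1$1) (mat 1)
    = mscale l (block_mat a b c) + mscale (M$1$2) (matrix_unit 1 2) + mscale (M$1$3) (matrix_unit 1 3)"
proof -
  have "M$3$3 = M$1$1 - (M$2$2 - M$1$1) - 3 * M$1$1"
    using assms(2) unfolding trace_3 by (simp add: algebra_simps eq_neg_iff_add_eq_0)
  then have "M$3$3 = M$1$1 - l*a" using assms(1,5) by simp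
  then show ?thesis
    using assms(3-7) by (intro mat3_eqI) (simp_all add: mat_def block_mat_def algebra_simps)
qed

lemma first_column_zero_span:
  fixes S :: "('a::field^3^3) set"
  assumes three: "(3::'a) = 0" and S: "traceless_isotropic S"
    and column: "\<And>M. M \<in> S \<Longrightarrow> M$2$1 = 0 \<and> M$3$1 = 0"
  shows "\<exists>a b c. a^2 + b*c = 0 \<and> (\<forall>M\<in>S.
    M - mscale (M$1$1) (mat 1) \<in> ms.span {block_mat a b c, matrix_unit 1 2, matrix_unit 1 3})"
proof -
  obtain a b c where isotropic: "a^2 + b*c = 0" and block_line:
    "\<And>M. M \<in> S \<Longrightarrow> \<exists>l. M$2$2 - M$1$1 = l*a \<and> M$2$3 = l*b \<and> M$3$2 = l*c"
    using first_column_zero_block_line[OF three S column] by blast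
  have "\<forall>M\<in>S. M - mscale (M$1$1) (mat 1) \<in> ms.span {block_mat a b c, matrix_unit 1 2, matrix_unit 1 3}"
  proof
    fix M assume M: "M \<in> S"
    then obtain l where l: "M$2$2 - M$1$1 = l*a" "M$2$3 = l*b" "M$3$2 = l*c"
      using block_line by blast
    have "trace M = 0" using M S unfolding traceless_isotropic_def by blast
    then have "M - mscale (M$1$1) (mat 1) = mscale l (block_mat a b c)
        + mscale (M$1$2) (matrix_unit 1 2) + mscale (M$1$3) (matrix_unit 1 3)"
      using first_column_zero_decomposition[OF three _ _ _ l] column[OF M] by blast
    also have "\<dots> \<in> ms.span {block_mat a b c, matrix_unit 1 2, matrix_unit 1 3}"
      by (intro ms.span_add ms.span_scale ms.span_base) auto
    finally show "M - mscale (M$1$1) (mat 1) \<in> ms.span {block_mat a b c, matrix_unit 1 2, matrix_unit 1 3}" .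
  qed
  with isotropic show ?thesis by blast
qed

lemma dim_le_Suc_dim_kernel:
  fixes F :: "('a::field^3^3) set"
  assumes sub: "ms.subspace F" and line: "\<And>M. M \<in> F \<Longrightarrow> \<exists>t. M *v v = t *s y"
  shows "ms.dim F \<le> ms.dim {M\<in>F. M *v v = 0} + 1"
proof (cases "\<forall>M\<in>F. M *v v = 0")
  case True
  then show ?thesis by (simp add: Collect_conj_eq inf_absorb1 subsetI)
next
  case False
  then obtain A where A: "A \<in> F" "A *v v \<noteq> 0" by auto
  obtain t0 where t0: "A *v v = t0 *s y" using line A(1) by blast
  have "t0 \<noteq> 0" using A t0 by auto
  define G where "G = {M\<in>F. M *v v = 0}"
  have "F \<subseteq> ms.span (insert A G)"
  proof
    fix M assume M: "M \<in> F"
    obtain t where t: "M *v v = t *s y" using line M by blast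
    have "(M - mscale (t / t0) A) *v v = 0"
      using \<open>t0 \<noteq> 0\<close> by (simp add: matrix_vector_mult_diff_rdistrib mscale_matrix_vector_mult t t0)
    then have "M - mscale (t / t0) A \<in> G"
      unfolding G_def using ms.subspace_diff[OF sub M ms.subspace_scale[OF sub A(1)]] by simp
    then have "(M - mscale (t / t0) A) + mscale (t / t0) A \<in> ms.span (insert A G)"
      by (intro ms.span_add ms.span_scale) (auto intro: ms.span_base)
    then show "M \<in> ms.span (insert A G)" by simp
  qed
  then have "ms.dim F \<le> ms.dim (insert A G)" by (rule ms.dim_mono)
  also have "\<dots> \<le> ms.dim G + 1" by (simp add: ms.dim_insert)
  finally show ?thesis unfolding G_def .
qed

lemma matrix_units_mem_if_first_column_line:
  fixes F :: "('a::field^3^3) set"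
  assumes three: "(3::'a) = 0" and sub: "ms.subspace F" and dim: "ms.dim F = 4"
    and F: "traceless_isotropic F" and line: "\<And>M. M \<in> F \<Longrightarrow> \<exists>t. M *v axis 1 1 = t *s y"
  shows "matrix_unit 1 2 \<in> F \<and> matrix_unit 1 3 \<in> F"
proof -
  define G where "G = {M\<in>F. M *v axis 1 1 = 0}"
  have sub_G: "ms.subspace G"
    unfolding ms.subspace_def G_def
    using ms.subspace_0[OF sub] ms.subspace_add[OF sub] ms.subspace_scale[OF sub]
    by (auto simp: matrix_vector_mult_add_rdistrib mscale_matrix_vector_mult)
  have dim_G: "3 \<le> ms.dim G"
    using dim_le_Suc_dim_kernel[OF sub line] dim unfolding G_def by simp
  have column: "M$i$1 = 0" if "M \<in> G" for M i
    using that matrix_vector_mult_axis_1[of M i] unfolding G_def by simp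
  have iso_G: "traceless_isotropic G"
    using F unfolding traceless_isotropic_def G_def by auto
  have column_G: "M$2$1 = 0 \<and> M$3$1 = 0" if "M \<in> G" for M
    using column[OF that] by blast
  obtain a b c where M_span: "\<forall>M\<in>G.
    M - mscale (M$1$1) (mat 1) \<in> ms.span {block_mat a b c, matrix_unit 1 2, matrix_unit 1 3}"
    using first_column_zero_span[OF three iso_G column_G] by blast
  define B where "B = {block_mat a b c, matrix_unit 1 2, matrix_unit 1 3}"
  have "G \<subseteq> ms.span B"
  proof
    fix M assume "M \<in> G"
    moreover have "M - mscale (M$1$1) (mat 1) = M" using column[OF \<open>M \<in> G\<close>, of 1] by simp
    ultimately show "M \<in> ms.span B" using M_span unfolding B_def by force
  qed
  moreover have "ms.dim (ms.span B) \<le> 3"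
  proof -
    have "card B \<le> 3" unfolding B_def by (simp add: card_insert_if)
    then show ?thesis using ms.dim_le_card[of "ms.span B" B] unfolding B_def by simp
  qed
  ultimately have "G = ms.span B"
    using ms.subspace_dim_equal[OF sub_G ms.subspace_span] dim_G by simp
  then show ?thesis
    unfolding B_def G_def by (auto intro: ms.span_base)
qed

lemma first_column_zero_if_matrix_units_mem:
  fixes F :: "('a::field^3^3) set"
  assumes "traceless_isotropic F" "matrix_unit 1 2 \<in> F" "matrix_unit 1 3 \<in> F" "M \<in> F"
  shows "M$2$1 = 0 \<and> M$3$1 = 0"
proof -
  have "trace (M ** matrix_unit 1 2) = M$2$1" "trace (M ** matrix_unit 1 3) = M$3$1"
    by (simp_all add: trace_3 matrix_mult_nth_3)
  then show ?thesis using assms unfolding traceless_isotropic_def by metis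
qed

section \<open>Conjugation into \<open>K I\<^sub>3 + NT\<^sub>3\<close>\<close>

text \<open>The numeral \<open>3\<close> of the type \<open>3\<close> is \<open>0\<close>, its least element, so \<open>NT3\<close> consists of the
  matrices supported on the positions \<open>(3, 1), (3, 2), (1, 2)\<close>.\<close>

lemma mem_NT3_iff:
  "N \<in> NT3 \<longleftrightarrow> N$1$1 = 0 \<and> N$2$1 = 0 \<and> N$2$2 = 0 \<and> N$2$3 = 0 \<and> N$1$3 = 0 \<and> N$3$3 = 0"
  unfolding NT3_def by (simp add: forall_3 less_eq_bit1_def bit1.Rep_numeral bit1.Rep_1 conj_ac)

lemma mem_KI_NT3_if_mem_NT3:
  assumes "N \<in> NT3"
  shows "N \<in> KI_NT3"
proof -
  have "N = mat 0 + N" by simp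
  then show ?thesis using assms unfolding KI_NT3_def by blast
qed

lemma subspace_KI_NT3: "ms.subspace (KI_NT3 :: ('a::field^3^3) set)"
  unfolding ms.subspace_def
proof (intro conjI ballI allI)
  show "(0::'a^3^3) \<in> KI_NT3"
    by (rule mem_KI_NT3_if_mem_NT3) (simp add: mem_NT3_iff)
next
  fix U V :: "'a^3^3" assume "U \<in> KI_NT3" "V \<in> KI_NT3"
  then obtain c N d N' where "U = mat c + N" "N \<in> NT3" "V = mat d + N'" "N' \<in> NT3"
    unfolding KI_NT3_def by blast
  then have "U + V = mat (c + d) + (N + N')" "N + N' \<in> NT3"
    by (auto intro!: mat3_eqI simp: mat_def mem_NT3_iff)
  then show "U + V \<in> KI_NT3" unfolding KI_NT3_def by blast
next
  fix k and U :: "'a^3^3" assume "U \<in> KI_NT3"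
  then obtain c N where "U = mat c + N" "N \<in> NT3" unfolding KI_NT3_def by blast
  then have "mscale k U = mat (k * c) + mscale k N" "mscale k N \<in> NT3"
    by (auto intro!: mat3_eqI simp: mat_def mem_NT3_iff algebra_simps)
  then show "mscale k U \<in> KI_NT3" unfolding KI_NT3_def by blast
qed

lemma dim_KI_NT3_le: "ms.dim (KI_NT3 :: ('a::field^3^3) set) \<le> 4"
proof -
  define B :: "('a^3^3) set" where
    "B = {mat 1, matrix_unit 1 2, matrix_unit 3 1, matrix_unit 3 2}"
  have "KI_NT3 \<subseteq> ms.span B"
  proof
    fix U :: "'a^3^3" assume "U \<in> KI_NT3"
    then obtain c N where U: "U = mat c + N" "N \<in> NT3" unfolding KI_NT3_def by blast
    then have "U = mscale c (mat 1) + mscale (N$1$2) (matrix_unit 1 2)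
        + mscale (N$3$1) (matrix_unit 3 1) + mscale (N$3$2) (matrix_unit 3 2)"
      by (intro mat3_eqI) (simp_all add: mat_def mem_NT3_iff)
    also have "\<dots> \<in> ms.span B"
      unfolding B_def by (intro ms.span_add ms.span_scale ms.span_base) auto
    finally show "U \<in> ms.span B" .
  qed
  moreover have "card B \<le> 4" unfolding B_def by (simp add: card_insert_if)
  ultimately show ?thesis
    using ms.dim_le_card[of KI_NT3 B] unfolding B_def by simp
qed

lemma similar_space_KI_NT3_if_subset:
  fixes F :: "('a::field^3^3) set"
  assumes sub: "ms.subspace F" and dim: "4 \<le> ms.dim F"
    and PQ: "P ** Q = mat 1" "Q ** P = mat 1" and F: "F \<subseteq> (\<lambda>K. P ** K ** Q) ` KI_NT3"
  shows "similar_space F KI_NT3"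
proof -
  have "ms.dim ((\<lambda>K. P ** K ** Q) ` KI_NT3) = ms.dim (KI_NT3 :: ('a^3^3) set)"
    by (rule dim_conj_image[OF PQ])
  also have "\<dots> \<le> ms.dim F" using dim_KI_NT3_le dim by (rule order.trans)
  finally have "ms.dim ((\<lambda>K. P ** K ** Q) ` KI_NT3) \<le> ms.dim F" .
  then have "F = (\<lambda>K. P ** K ** Q) ` KI_NT3"
    using ms.subspace_dim_equal[OF sub module_hom.subspace_image[OF module_hom_conj subspace_KI_NT3] F]
    by blast
  then show ?thesis unfolding similar_space_def using PQ by blast
qed

lemma block_generators_intertwine_KI_NT3:
  fixes a b c :: "'a::field"
  assumes isotropic: "a^2 + b*c = 0"
  shows "\<exists>P. det P \<noteq> 0 \<and> (\<forall>M \<in> {mat 1, block_mat a b c, matrix_unit 1 2, matrix_unit 1 3}.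
    \<exists>K\<in>KI_NT3. M ** P = P ** K)"
proof -
  have "(0::'a^3^3) \<in> NT3" by (simp add: mem_NT3_iff)
  then have "mat 1 + 0 \<in> (KI_NT3 :: ('a^3^3) set)" unfolding KI_NT3_def by blast
  then have mat_1: "(mat 1 :: 'a^3^3) \<in> KI_NT3" "mat 1 ** P = P ** mat 1" for P :: "'a^3^3"
    by simp_all
  show ?thesis
  proof (cases "b = 0")
    case False
    \<comment> \<open>the first column of \<open>P\<close> spans the kernel of the nilpotent block, the second is mapped to it\<close>
    define P :: "'a^3^3" where "P = vector [vector [0, 0, 1], vector [b, 0, 0], vector [-a, 1, 0]]"
    have "b * c = - (a * a)"
      using isotropic by (simp add: power2_eq_square eq_neg_iff_add_eq_0 add.commute)
    then have "block_mat a b c ** P = P ** matrix_unit 1 2"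
      "matrix_unit 1 2 ** P = P ** mscale b (matrix_unit 3 1)"
      "matrix_unit 1 3 ** P = P ** (matrix_unit 3 2 - mscale a (matrix_unit 3 1))"
      by (auto intro!: mat3_eqI simp: P_def block_mat_def matrix_mult_nth_3 algebra_simps)
    moreover have "matrix_unit 1 2 \<in> KI_NT3" "mscale b (matrix_unit 3 1) \<in> KI_NT3"
      "matrix_unit 3 2 - mscale a (matrix_unit 3 1) \<in> KI_NT3"
      by (auto intro!: mem_KI_NT3_if_mem_NT3 simp: mem_NT3_iff)
    moreover have "det P \<noteq> 0" using False by (simp add: P_def det_3)
    ultimately show ?thesis using mat_1 by blast
  next
    case True
    with isotropic have "a = 0" by simp
    define P :: "'a^3^3" where "P = vector [vector [0, 0, 1], vector [0, 1, 0], vector [1, 0, 0]]"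
    have "block_mat a b c ** P = P ** mscale c (matrix_unit 1 2)"
      "matrix_unit 1 2 ** P = P ** matrix_unit 3 2"
      "matrix_unit 1 3 ** P = P ** matrix_unit 3 1"
      using True \<open>a = 0\<close> by (auto intro!: mat3_eqI simp: P_def block_mat_def matrix_mult_nth_3)
    moreover have "mscale c (matrix_unit 1 2) \<in> KI_NT3" "matrix_unit 3 2 \<in> KI_NT3"
      "matrix_unit 3 1 \<in> KI_NT3"
      by (auto intro!: mem_KI_NT3_if_mem_NT3 simp: mem_NT3_iff)
    moreover have "det P \<noteq> 0" by (simp add: P_def det_3)
    ultimately show ?thesis using mat_1 by blast
  qed
qed

lemma block_span_conj_KI_NT3:
  fixes a b c :: "'a::field"
  assumes "a^2 + b*c = 0"
  obtains P Q where "P ** Q = mat 1" "Q ** P = mat 1"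
    "ms.span {mat 1, block_mat a b c, matrix_unit 1 2, matrix_unit 1 3}
      \<subseteq> (\<lambda>K. P ** K ** Q) ` KI_NT3"
proof -
  define B where "B = {mat 1, block_mat a b c, matrix_unit 1 2, matrix_unit 1 3}"
  obtain P :: "'a^3^3" where "det P \<noteq> 0" and intertwine: "\<forall>M\<in>B. \<exists>K\<in>KI_NT3. M ** P = P ** K"
    using block_generators_intertwine_KI_NT3[OF assms] unfolding B_def by blast
  then obtain Q where PQ: "P ** Q = mat 1" "Q ** P = mat 1"
    using invertible_det_nz unfolding invertible_def by blast
  have "B \<subseteq> (\<lambda>K. P ** K ** Q) ` KI_NT3"
  proof
    fix M assume "M \<in> B"
    then obtain K where "K \<in> KI_NT3" "M ** P = P ** K" using intertwine by blast
    moreover have "M = M ** P ** Q" using PQ(1) by (simp flip: matrix_mul_assoc)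
    ultimately show "M \<in> (\<lambda>K. P ** K ** Q) ` KI_NT3" by auto
  qed
  then have "ms.span B \<subseteq> (\<lambda>K. P ** K ** Q) ` KI_NT3"
    by (rule ms.span_minimal[OF _ module_hom.subspace_image[OF module_hom_conj subspace_KI_NT3]])
  then show thesis using that PQ unfolding B_def by blast
qed

lemma similar_KI_NT3_if_first_column_line:
  fixes F :: "('a::field^3^3) set"
  assumes three: "(3::'a) = 0" and sub: "ms.subspace F" and dim: "ms.dim F = 4"
    and F: "traceless_isotropic F" and line: "\<And>M. M \<in> F \<Longrightarrow> \<exists>t. M *v axis 1 1 = t *s y"
  shows "similar_space F KI_NT3"
proof -
  have units: "matrix_unit 1 2 \<in> F \<and> matrix_unit 1 3 \<in> F"
    by (rule matrix_units_mem_if_first_column_line[OF assms])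
  have column: "M$2$1 = 0 \<and> M$3$1 = 0" if "M \<in> F" for M
    using units first_column_zero_if_matrix_units_mem[OF F _ _ that] by blast
  obtain a b c where isotropic: "a^2 + b*c = 0" and M_span: "\<forall>M\<in>F.
    M - mscale (M$1$1) (mat 1) \<in> ms.span {block_mat a b c, matrix_unit 1 2, matrix_unit 1 3}"
    using first_column_zero_span[OF three F column] by blast
  define B where "B = {mat 1, block_mat a b c, matrix_unit 1 2, matrix_unit 1 3}"
  have F_span: "F \<subseteq> ms.span B"
  proof
    fix M assume "M \<in> F"
    have "mscale (M$1$1) (mat 1) + (M - mscale (M$1$1) (mat 1)) \<in> ms.span B"
      using M_span \<open>M \<in> F\<close> ms.span_mono[of _ B] unfolding B_def
      by (intro ms.span_add ms.span_scale) (auto intro: ms.span_base)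
    then show "M \<in> ms.span B" by simp
  qed
  obtain P Q :: "'a^3^3"
    where PQ: "P ** Q = mat 1" "Q ** P = mat 1" and B: "ms.span B \<subseteq> (\<lambda>K. P ** K ** Q) ` KI_NT3"
    using block_span_conj_KI_NT3[OF isotropic] unfolding B_def by blast
  from F_span B have "F \<subseteq> (\<lambda>K. P ** K ** Q) ` KI_NT3" by (rule order.trans)
  then show ?thesis using dim by (intro similar_space_KI_NT3_if_subset[OF sub _ PQ]) simp_all
qed

lemma similar_KI_NT3_if_image_line:
  fixes F :: "('a::field^3^3) set"
  assumes three: "(3::'a) = 0" and sub: "ms.subspace F" and dim: "ms.dim F = 4"
    and F: "traceless_isotropic F" and "x \<noteq> 0" and line: "\<And>M. M \<in> F \<Longrightarrow> \<exists>t. M *v x = t *s y"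
  shows "similar_space F KI_NT3"
proof -
  obtain P Q :: "'a^3^3" where PQ: "P ** Q = mat 1" "Q ** P = mat 1" and x: "P *v axis 1 1 = x"
    by (rule invertible_with_first_column[OF \<open>x \<noteq> 0\<close>])
  define F' where "F' = (\<lambda>M. Q ** M ** P) ` F"
  have "similar_space F' KI_NT3"
  proof (rule similar_KI_NT3_if_first_column_line[OF three])
    show "ms.subspace F'"
      unfolding F'_def by (rule module_hom.subspace_image[OF module_hom_conj sub])
    show "ms.dim F' = 4" unfolding F'_def using dim_conj_image[OF PQ(2,1)] dim by simp
    show "traceless_isotropic F'" unfolding F'_def by (rule traceless_isotropic_conj[OF PQ(1) F])
    fix M' assume "M' \<in> F'"
    then obtain M where "M \<in> F" "M' = Q ** M ** P" unfolding F'_def by blast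
    moreover obtain t where "M *v x = t *s y" using line \<open>M \<in> F\<close> by blast
    ultimately have "M' *v axis 1 1 = t *s (Q *v y)"
      using x by (simp add: vector_scalar_commute flip: matrix_vector_mul_assoc)
    then show "\<exists>t. M' *v axis 1 1 = t *s (Q *v y)" by blast
  qed
  then have "similar_space ((\<lambda>M. P ** M ** Q) ` F') KI_NT3" by (rule similar_space_conj[OF PQ])
  moreover have "(\<lambda>M. P ** M ** Q) ` F' = F"
    unfolding F'_def image_image conj_conj_cancel[OF PQ(1)] by simp
  ultimately show ?thesis by simp
qed

theorem mainTheorem18:
  fixes F :: "('a::field ^3^3) set"
  assumes "CHAR('a) = 3"
    and "exceptional_one_spec F"
  shows "\<forall>x::'a^3. x \<noteq> 0 \<longrightarrow> vec.dim {M *v x | M. M \<in> F} \<ge> 2"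
proof (intro allI impI)
  fix x :: "'a^3" assume "x \<noteq> 0"
  have one_spec: "one_spec_subspace F" and dim: "ms.dim F = 4" and "\<not> similar_space F KI_NT3"
    using assms(2) unfolding exceptional_one_spec_def by auto
  then have sub: "ms.subspace F" unfolding one_spec_subspace_def by blast
  have F: "traceless_isotropic F" by (rule one_spec_subspace_traceless_isotropic[OF assms(1) one_spec])
  show "vec.dim {M *v x | M. M \<in> F} \<ge> 2"
  proof (rule ccontr)
    assume "\<not> ?thesis"
    then have "vec.dim {M *v x | M. M \<in> F} \<le> 1" by simp
    then obtain y where "{M *v x | M. M \<in> F} \<subseteq> vec.span {y}"
      by (rule vec.dim_le_1_obtains_span_singleton)
    then have "\<exists>t. M *v x = t *s y" if "M \<in> F" for M
      using that unfolding vec.span_singleton by blast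
    then have "similar_space F KI_NT3"
      by (rule similar_KI_NT3_if_image_line[OF three_eq_0_if_CHAR[OF assms(1)] sub dim F \<open>x \<noteq> 0\<close>])
    with \<open>\<not> similar_space F KI_NT3\<close> show False ..
  qed
qed

end
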